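(* There exists $N_0$ such that for every integer $n>N_0$, \[ b_{sn+s-1}<b_{sn+s-2}<\cdots<b_{sn+1}<b_n . \] Moreover $b_n\le b_{sn}$ for every $n\ge1$, and $b_n=b_{sn}$ (for any, equivalently all, $n\ge1$) if and only if $h(0)=0$.
   Context: Fix integers $p\ge 3$ and $2\le s<p$, and a set $A\subset\{0,1,\dots,p-1\}$ with $\#A=s$. Let $h:\{0,1,\dots,s-1\}\to A$ be the unique strictly increasing bijection. For a positive integer $n$ with base-$s$ expansion $n=\sum_{i=0}^k\varepsilon_i s^i$ ($\varepsilon_i\in\{0,\dots,s-1\}$, $\varepsilon_k\ne 0$), put $a_n=\sum_{i=0}^k h(\varepsilon_i)p^i$. Let $b_n=a_n/n^{\log_s p}$ for $n\ge1$. *)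

theory Defs
  imports Complex_Main
begin

definition hmap :: "nat set \<Rightarrow> nat \<Rightarrow> nat" where
  "hmap A i = sorted_list_of_set A ! i"

text \<open>a_n = sum_{i=0}^k h(eps_i) p^i where n = sum_{i=0}^k eps_i s^i, eps_k \<noteq> 0.
  The indices 0..k are exactly those i with s^i \<le> n; eps_i = (n div s^i) mod s.\<close>
definition aseq :: "nat \<Rightarrow> nat \<Rightarrow> nat set \<Rightarrow> nat \<Rightarrow> nat" where
  "aseq p s A n = (\<Sum>i\<in>{i. s ^ i \<le> n}. hmap A ((n div s ^ i) mod s) * p ^ i)"

definition bseq :: "nat \<Rightarrow> nat \<Rightarrow> nat set \<Rightarrow> nat \<Rightarrow> real" where
  "bseq p s A n = real (aseq p s A n) / (real n) powr (log (real s) (real p))"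

end

theory Submission
  imports Defs
begin

text \<open>Writing \<open>n = s q + r\<close> with \<open>r < s\<close> gives \<open>a\<^sub>n = p a\<^sub>q + h(r)\<close>, while
  \<open>n\<^sup>\<alpha>\<close> with \<open>\<alpha> = log\<^sub>s p\<close> scales by exactly \<open>p\<close> from \<open>q\<close> to \<open>s q\<close>.
  Hence \<open>b\<^sub>s\<^sub>n = b\<^sub>n + h(0)/(p n\<^sup>\<alpha>)\<close>, which gives the last two claims.
  For the first one, \<open>a\<^sub>n \<ge> p\<^sup>k\<close> when \<open>s\<^sup>k \<le> n\<close>, and since \<open>p > s\<close> this eventually
  dominates \<open>s n + s\<close>; then passing from \<open>m = s n + j\<close> to \<open>m + 1\<close> changes the numerator
  \<open>p a\<^sub>n + h(j)\<close> by less than the factor \<open>(m+1)/m\<close> while the denominator grows by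
  \<open>((m+1)/m)\<^sup>\<alpha>\<close> with \<open>\<alpha> > 1\<close>.\<close>

lemma powr_mult_succ_less:
  fixes x a :: real
  assumes "0 < x" "1 < a"
  shows "x powr a * (x + 1) < (x + 1) powr a * x"
proof -
  have "((x + 1) / x) powr 1 < ((x + 1) / x) powr a"
    using assms by (intro powr_less_mono) auto
  then have "(x + 1) / x < (x + 1) powr a / x powr a"
    using assms by (simp add: powr_divide)
  then show ?thesis
    using assms by (simp add: field_simps)
qed

lemma divide_powr_succ_less:
  fixes x a c h\<^sub>0 h\<^sub>1 :: real
  assumes "0 < x" "1 < a" "0 < c" "0 \<le> h\<^sub>0" "h\<^sub>1 * x \<le> c"
  shows "(c + h\<^sub>1) / (x + 1) powr a < (c + h\<^sub>0) / x powr a"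
proof -
  define P Q where "P = x powr a" and "Q = (x + 1) powr a"
  have PQ: "0 < P" "0 < Q"
    unfolding P_def Q_def using assms by auto
  have "0 \<le> h\<^sub>0 * x"
    using assms by simp
  then have "(c + h\<^sub>1) * x \<le> (c + h\<^sub>0) * (x + 1)"
    using assms by (simp add: algebra_simps; linarith)
  then have "(c + h\<^sub>1) * x * P \<le> (c + h\<^sub>0) * (x + 1) * P"
    using PQ by (intro mult_right_mono) auto
  also have "\<dots> = (c + h\<^sub>0) * (P * (x + 1))"
    by (simp add: mult_ac)
  also have "\<dots> < (c + h\<^sub>0) * (Q * x)"
    unfolding P_def Q_def using powr_mult_succ_less[OF assms(1,2)] assms
    by (intro mult_strict_left_mono) auto
  finally have "((c + h\<^sub>1) * P) * x < ((c + h\<^sub>0) * Q) * x"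
    by (simp only: mult_ac)
  then have "(c + h\<^sub>1) * P < (c + h\<^sub>0) * Q"
    using assms(1) by simp
  then show ?thesis
    using PQ by (simp add: P_def Q_def field_simps)
qed

lemma less_power_self: "2 \<le> (s::nat) \<Longrightarrow> i < s ^ i"
  using less_exp[of i] power_mono[of 2 s i] by linarith

lemma finite_power_le: "2 \<le> (s::nat) \<Longrightarrow> finite {i. s ^ i \<le> n}"
  by (rule finite_subset[of _ "{..n}"]) (auto dest: less_power_self[of s] intro: less_imp_le order.trans)

lemma power_le_mult_add_iff:
  fixes s n j :: nat
  assumes "j < s"
  shows "s ^ Suc k \<le> s * n + j \<longleftrightarrow> s ^ k \<le> n"
proof
  assume "s ^ Suc k \<le> s * n + j"
  then show "s ^ k \<le> n"
    using assms mult_le_mono2[of "n + 1" "s ^ k" s] by (cases "s ^ k \<le> n") auto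
qed (simp add: trans_le_add1)

lemma power_le_mult_add_eq:
  fixes s n j :: nat
  assumes "j < s" "1 \<le> s * n + j"
  shows "{i. s ^ i \<le> s * n + j} = insert 0 (Suc ` {i. s ^ i \<le> n})"
proof -
  have "i \<in> {i. s ^ i \<le> s * n + j} \<longleftrightarrow> i \<in> insert 0 (Suc ` {i. s ^ i \<le> n})" for i
    using assms power_le_mult_add_iff[OF assms(1)] by (cases i) auto
  then show ?thesis by blast
qed

locale digit_system =
  fixes p s :: nat and A :: "nat set"
  assumes s_ge_2: "2 \<le> s" and s_less_p: "s < p"
    and A_subset: "A \<subseteq> {0..<p}" and card_A: "card A = s"
begin

lemma p_pos: "0 < p"
  using s_ge_2 s_less_p by linarith

lemma hmap_less: "i < s \<Longrightarrow> hmap A i < p"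
proof -
  assume "i < s"
  then have "sorted_list_of_set A ! i \<in> set (sorted_list_of_set A)"
    using card_A by simp
  then show ?thesis
    using A_subset finite_subset[OF A_subset] unfolding hmap_def by auto
qed

lemma hmap_strict_mono: "i < j \<Longrightarrow> j < s \<Longrightarrow> hmap A i < hmap A j"
  unfolding hmap_def using sorted_wrt_nth_less[OF strict_sorted_list_of_set] card_A by auto

lemma aseq_mult_add:
  assumes "j < s" "1 \<le> s * n + j"
  shows "aseq p s A (s * n + j) = p * aseq p s A n + hmap A j"
proof -
  let ?f = "\<lambda>m i. hmap A ((m div s ^ i) mod s) * p ^ i"
  have shift: "?f (s * n + j) (Suc i) = p * ?f n i" for i
    using assms(1) by (simp add: div_mult2_eq)
  have "aseq p s A (s * n + j) = ?f (s * n + j) 0 + (\<Sum>i\<in>Suc ` {i. s ^ i \<le> n}. ?f (s * n + j) i)"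
    unfolding aseq_def power_le_mult_add_eq[OF assms]
    using finite_power_le[OF s_ge_2] by (subst sum.insert) auto
  also have "(\<Sum>i\<in>Suc ` {i. s ^ i \<le> n}. ?f (s * n + j) i) = (\<Sum>i\<in>{i. s ^ i \<le> n}. p * ?f n i)"
    by (rule sum.reindex_cong[of Suc]) (simp_all only: inj_Suc shift)
  also have "\<dots> = p * aseq p s A n"
    unfolding aseq_def by (simp add: sum_distrib_left)
  finally show ?thesis
    using assms(1) by simp
qed

lemma aseq_pos: "1 \<le> m \<Longrightarrow> 1 \<le> aseq p s A m"
proof (induction m rule: less_induct)
  case (less m)
  define q r where "q = m div s" and "r = m mod s"
  have r: "r < s" and m: "m = s * q + r"
    unfolding q_def r_def using s_ge_2 by simp_all
  have rec: "aseq p s A m = p * aseq p s A q + hmap A r"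
    using aseq_mult_add[OF r] m less.prems by simp
  show ?case
  proof (cases "q = 0")
    case True
    then have "hmap A 0 < hmap A r"
      using m less.prems r by (intro hmap_strict_mono) auto
    then show ?thesis using rec by simp
  next
    case False
    then have "1 \<le> aseq p s A q"
      using less.IH[of q] less.prems s_ge_2 by (simp add: q_def)
    then show ?thesis
      using rec p_pos by (simp add: trans_le_add1 one_le_mult_iff)
  qed
qed

lemma aseq_ge_power: "s ^ k \<le> m \<Longrightarrow> p ^ k \<le> aseq p s A m"
proof (induction k arbitrary: m)
  case 0
  then show ?case using aseq_pos by simp
next
  case (Suc k)
  define q r where "q = m div s" and "r = m mod s"
  have r: "r < s" and m: "m = s * q + r"
    unfolding q_def r_def using s_ge_2 by simp_all
  have "s ^ k \<le> q"
    using div_le_mono[OF Suc.prems, of s] s_ge_2 by (simp add: q_def)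
  then have "p ^ Suc k \<le> p * aseq p s A q"
    using Suc.IH by simp
  moreover have "1 \<le> m"
    using Suc.prems one_le_power[of s "Suc k"] s_ge_2 by linarith
  then have "aseq p s A m = p * aseq p s A q + hmap A r"
    using aseq_mult_add[OF r] m by simp
  ultimately show ?case by linarith
qed

lemma eventually_power_le_power: "\<exists>K. \<forall>k\<ge>K. s ^ (k + 2) \<le> p ^ k"
proof -
  obtain K where "real s ^ 2 < (real p / real s) ^ K"
    using real_arch_pow[of "real p / real s"] s_ge_2 s_less_p by auto
  then have "real (s ^ (K + 2)) < real (p ^ K)"
    using s_ge_2 by (simp add: power_divide field_simps power_add power2_eq_square mult_ac)
  then have base: "s ^ (K + 2) \<le> p ^ K"
    by linarith
  have "s ^ (k + 2) \<le> p ^ k" if "K \<le> k" for k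
    using that
  proof (induction k rule: dec_induct)
    case (step k)
    have "s ^ (Suc k + 2) = s * s ^ (k + 2)" by simp
    also have "\<dots> \<le> p * p ^ k"
      using step.IH s_less_p by (intro mult_le_mono) auto
    finally show ?case by simp
  qed (rule base)
  then show ?thesis by blast
qed

lemma eventually_mult_add_le_aseq: "\<exists>N\<^sub>0. \<forall>n>N\<^sub>0. s * n + s \<le> aseq p s A n"
proof -
  obtain K where K: "\<And>k. K \<le> k \<Longrightarrow> s ^ (k + 2) \<le> p ^ k"
    using eventually_power_le_power by blast
  have "s * n + s \<le> aseq p s A n" if n: "s ^ K < n" for n
  proof -
    obtain k where k: "s ^ k \<le> n" "n < s ^ (k + 1)"
      using ex_power_ivl1[OF s_ge_2, of n] n by auto
    have "K \<le> k"
      using power_less_imp_less_exp[of s K "k + 1"] n k(2) s_ge_2 by simp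
    have "s * (n + 1) \<le> s * s ^ (k + 1)"
      using k(2) by (intro mult_le_mono2) simp
    also have "\<dots> \<le> p ^ k"
      using K[OF \<open>K \<le> k\<close>] by simp
    also have "\<dots> \<le> aseq p s A n"
      using aseq_ge_power[OF k(1)] .
    finally show ?thesis by simp
  qed
  then show ?thesis by blast
qed

abbreviation \<alpha> :: real where
  "\<alpha> \<equiv> log (real s) (real p)"

lemma one_less_\<alpha>: "1 < \<alpha>"
  using s_ge_2 s_less_p by (subst less_log_iff) auto

lemma mult_powr_\<alpha>: "(real s * real n) powr \<alpha> = real p * real n powr \<alpha>"
  using s_ge_2 p_pos by (simp add: powr_mult)

lemma bseq_mult_add:
  assumes "j < s" "1 \<le> n"
  shows "bseq p s A (s * n + j) = (real p * aseq p s A n + hmap A j) / real (s * n + j) powr \<alpha>"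
proof -
  have "1 \<le> s * n + j"
    using assms s_ge_2 by (simp add: trans_le_add1 one_le_mult_iff)
  from aseq_mult_add[OF assms(1) this] show ?thesis
    unfolding bseq_def by simp
qed

lemma bseq_mult:
  assumes "1 \<le> n"
  shows "bseq p s A (s * n) = bseq p s A n + hmap A 0 / (real p * real n powr \<alpha>)"
  using bseq_mult_add[of 0 n] assms s_ge_2 p_pos
  by (simp add: mult_powr_\<alpha> bseq_def add_divide_distrib)

lemma bseq_le_bseq_mult: "1 \<le> n \<Longrightarrow> bseq p s A n \<le> bseq p s A (s * n)"
  by (simp add: bseq_mult)

lemma bseq_eq_bseq_mult_iff: "1 \<le> n \<Longrightarrow> bseq p s A n = bseq p s A (s * n) \<longleftrightarrow> hmap A 0 = 0"
  using p_pos by (simp add: bseq_mult)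

lemma bseq_mult_add_Suc_less:
  assumes n: "1 \<le> n" and big: "s * n + s \<le> aseq p s A n"
    and j: "j + 1 < s" and "0 \<le> h"
  shows "bseq p s A (s * n + (j + 1)) < (real p * aseq p s A n + h) / real (s * n + j) powr \<alpha>"
proof -
  have "hmap A (j + 1) * (s * n + j) \<le> p * aseq p s A n"
    using hmap_less[OF j] big j by (intro mult_le_mono) auto
  then have "real (hmap A (j + 1)) * real (s * n + j) \<le> real p * aseq p s A n"
    by (metis of_nat_le_iff of_nat_mult)
  moreover have "0 < real p * aseq p s A n"
    using p_pos aseq_pos[OF n] by simp
  moreover have "0 < real (s * n + j)"
    using n s_ge_2 by (simp only: of_nat_0_less_iff) simp
  ultimately have "(real p * aseq p s A n + hmap A (j + 1)) / (real (s * n + j) + 1) powr \<alpha>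
      < (real p * aseq p s A n + h) / real (s * n + j) powr \<alpha>"
    using \<open>0 \<le> h\<close> by (intro divide_powr_succ_less one_less_\<alpha>) simp_all
  then show ?thesis
    using bseq_mult_add[of "j + 1" n] j n by (simp add: add_ac)
qed

lemma bseq_tail_decreasing:
  assumes n: "1 \<le> n" and big: "s * n + s \<le> aseq p s A n"
  shows "(\<forall>j. 1 \<le> j \<and> j + 1 \<le> s - 1 \<longrightarrow>
            bseq p s A (s * n + (j + 1)) < bseq p s A (s * n + j))
       \<and> bseq p s A (s * n + 1) < bseq p s A n"
proof (intro conjI allI impI)
  fix j assume "1 \<le> j \<and> j + 1 \<le> s - 1"
  then have j: "j + 1 < s" "j < s"
    by auto
  show "bseq p s A (s * n + (j + 1)) < bseq p s A (s * n + j)"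
    using bseq_mult_add_Suc_less[OF n big j(1), of "hmap A j"] bseq_mult_add[OF j(2) n] by simp
next
  have "real p * aseq p s A n / real (s * n) powr \<alpha> = bseq p s A n"
    using p_pos by (simp add: mult_powr_\<alpha> bseq_def)
  then show "bseq p s A (s * n + 1) < bseq p s A n"
    using bseq_mult_add_Suc_less[OF n big, of 0 0] s_ge_2 by simp
qed

end

theorem mainTheorem7:
  fixes p s :: nat and A :: "nat set"
  assumes "p \<ge> 3" and "2 \<le> s" and "s < p" and "A \<subseteq> {0..<p}" and "card A = s"
  shows "(\<exists>N0::nat. \<forall>n>N0.
            (\<forall>j. 1 \<le> j \<and> j + 1 \<le> s - 1 \<longrightarrow>
                 bseq p s A (s * n + (j + 1)) < bseq p s A (s * n + j))
            \<and> bseq p s A (s * n + 1) < bseq p s A n)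
       \<and> (\<forall>n\<ge>1. bseq p s A n \<le> bseq p s A (s * n))
       \<and> (\<forall>n\<ge>1. bseq p s A n = bseq p s A (s * n) \<longleftrightarrow> hmap A 0 = 0)"
proof -
  interpret digit_system p s A
    using assms(2-5) by unfold_locales
  obtain N\<^sub>0 where N\<^sub>0: "\<And>n. N\<^sub>0 < n \<Longrightarrow> s * n + s \<le> aseq p s A n"
    using eventually_mult_add_le_aseq by blast
  have "\<forall>n>N\<^sub>0. (\<forall>j. 1 \<le> j \<and> j + 1 \<le> s - 1 \<longrightarrow>
            bseq p s A (s * n + (j + 1)) < bseq p s A (s * n + j))
         \<and> bseq p s A (s * n + 1) < bseq p s A n"
    using bseq_tail_decreasing N\<^sub>0 by simp
  then show ?thesis
    using bseq_le_bseq_mult bseq_eq_bseq_mult_iff by blast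
qed

end
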